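(* InpHT achieves $\epsilon$-LDP, and with constant probability we have for any target $k$-way marginal $\beta$ \[ \|\mathcal{C}^\beta(t) - \mathcal{C}^\beta(t^* )\|_1 = \tilde{O}\left(\frac{(2d)^{k/2}}{\epsilon \sqrt{N}}\right).\]
   Context: There are $N$ users; user $i$ holds a vector in $\{0,1\}^d$, represented as an indicator vector $t_i\in\{0,1\}^{2^d}$ with a single 1 at index $j_i$, and $t=\sum_{i=1}^N t_i/N$. A mechanism $F$ is $\epsilon$-LDP if for all pairs of such indicator inputs $t_i,t'_i$ and every output $R$, $\Pr[F(t_i)=R]\le e^{\epsilon}\Pr[F(t'_i)=R]$. For $\beta\in\{0,1\}^d$ with $k$ ones, the $k$-way marginal is $\mathcal{C}^\beta(t)[\gamma]=\sum_{\eta:\eta\wedge\beta=\gamma} t[\eta]$. The Hadamard transform is $\theta=\phi t$ with $\phi_{a,b}=2^{-d/2}(-1)^{|a\wedge b|}$; any $k$-way marginal can be computed from the coefficients $\theta_\alpha$ with $|\alpha|\le k$ via $\mathcal{C}^\beta(t)_\gamma=\sum_{\alpha:\,\alpha\wedge\beta=\alpha}\theta_\alpha\sum_{\eta:\eta\wedge\beta=\gamma}\phi_{\alpha,\eta}$. Let $T=\sum_{\ell=1}^{k}\binom{d}{\ell}=O(d^k)$ be the number of these needed coefficients. The algorithm InpHT: each user samples one of these $T$ coefficient indices $\ell$ uniformly, computes the scaled coefficient $(-1)^{|j_i\wedge \ell|}\in\{-1,1\}$, and reports it via randomized response with $p_r=e^{\epsilon}/(1+e^{\epsilon})$ together with $\ell$.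 The aggregator averages the reports for each coefficient, divides by $(2p_r-1)$, rescales by $2^{-d/2}$ to get unbiased estimates $\hat\theta_\ell$ (the 0th coefficient is fixed to its known value), and reconstructs any marginal $\mathcal{C}^\beta(t^* )$ from these estimates by the formula above. $\tilde{O}$ suppresses logarithmic factors; $N$ is assumed sufficiently large. *)

theory Defs
  imports "HOL-Probability.Probability"
begin

text \<open>Vectors in {0,1}^d are represented as subsets of {..<d} (the set of coordinates equal to 1).
  Thus a \<and> b is intersection and |a \<and> b| is the cardinality of the intersection.\<close>

definition coef_set :: "nat \<Rightarrow> nat \<Rightarrow> nat set set" where
  "coef_set d k = {\<alpha>. \<alpha> \<subseteq> {..<d} \<and> 1 \<le> card \<alpha> \<and> card \<alpha> \<le> k}"

definition num_coefs :: "nat \<Rightarrow> nat \<Rightarrow> nat" where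
  "num_coefs d k = (\<Sum>l = 1..k. d choose l)"

definition p_r :: "real \<Rightarrow> real" where
  "p_r \<epsilon> = exp \<epsilon> / (1 + exp \<epsilon>)"

definition sgn_coef :: "nat set \<Rightarrow> nat set \<Rightarrow> int" where
  "sgn_coef J l = (-1) ^ card (J \<inter> l)"

definition inpht_user :: "nat \<Rightarrow> nat \<Rightarrow> real \<Rightarrow> nat set \<Rightarrow> (nat set \<times> int) pmf" where
  "inpht_user d k \<epsilon> J =
     bind_pmf (pmf_of_set (coef_set d k))
       (\<lambda>l. map_pmf (\<lambda>b. (l, if b then sgn_coef J l else - sgn_coef J l))
                     (bernoulli_pmf (p_r \<epsilon>)))"

definition is_LDP :: "real \<Rightarrow> 'a set \<Rightarrow> ('a \<Rightarrow> 'b pmf) \<Rightarrow> bool" where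
  "is_LDP \<epsilon> X F \<longleftrightarrow> (\<forall>x\<in>X. \<forall>x'\<in>X. \<forall>R. pmf (F x) R \<le> exp \<epsilon> * pmf (F x') R)"

definition inpht_reports :: "nat \<Rightarrow> nat \<Rightarrow> real \<Rightarrow> nat \<Rightarrow> (nat \<Rightarrow> nat set)
    \<Rightarrow> (nat \<Rightarrow> nat set \<times> int) pmf" where
  "inpht_reports d k \<epsilon> N j = Pi_pmf {..<N} ({}, 0) (\<lambda>i. inpht_user d k \<epsilon> (j i))"

definition had :: "nat \<Rightarrow> nat set \<Rightarrow> nat set \<Rightarrow> real" where
  "had d a b = 2 powr (- (real d / 2)) * (-1) ^ card (a \<inter> b)"

definition hist :: "nat \<Rightarrow> (nat \<Rightarrow> nat set) \<Rightarrow> nat set \<Rightarrow> real" where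
  "hist N j \<eta> = real (card {i\<in>{..<N}. j i = \<eta>}) / real N"

definition marginal :: "nat \<Rightarrow> (nat set \<Rightarrow> real) \<Rightarrow> nat set \<Rightarrow> nat set \<Rightarrow> real" where
  "marginal d tv \<beta> \<gamma> = (\<Sum>\<eta>\<in>{\<eta>\<in>Pow {..<d}. \<eta> \<inter> \<beta> = \<gamma>}. tv \<eta>)"

text \<open>Aggregator estimate of theta_alpha from the reports R: average of the reports for
  coefficient alpha, divided by (2 p_r - 1), rescaled by 2^{-d/2}; the 0th coefficient is fixed
  to its known value 2^{-d/2}; a coefficient nobody reported is estimated as 0.\<close>
definition theta_hat :: "nat \<Rightarrow> real \<Rightarrow> nat \<Rightarrow> (nat \<Rightarrow> nat set \<times> int) \<Rightarrow> nat set \<Rightarrow> real" where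
  "theta_hat d \<epsilon> N R \<alpha> =
     (if \<alpha> = {} then 2 powr (- (real d / 2))
      else (let S = {i\<in>{..<N}. fst (R i) = \<alpha>} in
            if S = {} then 0
            else 2 powr (- (real d / 2)) *
                 ((\<Sum>i\<in>S. real_of_int (snd (R i))) / real (card S)) / (2 * p_r \<epsilon> - 1)))"

definition recon_marginal :: "nat \<Rightarrow> (nat set \<Rightarrow> real) \<Rightarrow> nat set \<Rightarrow> nat set \<Rightarrow> real" where
  "recon_marginal d \<theta> \<beta> \<gamma> =
     (\<Sum>\<alpha>\<in>Pow \<beta>. \<theta> \<alpha> * (\<Sum>\<eta>\<in>{\<eta>\<in>Pow {..<d}. \<eta> \<inter> \<beta> = \<gamma>}. had d \<alpha> \<eta>))"

definition marginal_l1_err :: "nat \<Rightarrow> real \<Rightarrow> nat \<Rightarrow> (nat \<Rightarrow> nat set)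
    \<Rightarrow> (nat \<Rightarrow> nat set \<times> int) \<Rightarrow> nat set \<Rightarrow> real" where
  "marginal_l1_err d \<epsilon> N j R \<beta> =
     (\<Sum>\<gamma>\<in>Pow {..<d}. \<bar>marginal d (hist N j) \<beta> \<gamma>
                         - recon_marginal d (theta_hat d \<epsilon> N R) \<beta> \<gamma>\<bar>)"

end

theory Submission
  imports Defs
begin

text \<open>Privacy: a report is a uniformly chosen coefficient index together with a randomized
  response to a sign, and randomized response changes output probabilities by at most a factor
  \<open>exp \<epsilon>\<close>.

  Utility: a marginal over \<open>\<beta>\<close> is a linear function of the Hadamard coefficients
  \<open>\<theta>\<^sub>\<alpha>\<close>, \<open>\<alpha> \<subseteq> \<beta>\<close>, and this reconstruction turns a uniform error \<open>2 powr (- d / 2) * M\<close>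
  on those coefficients into an \<open>L\<^sub>1\<close> error of at most \<open>2 ^ k * M\<close>.  Every one of the
  \<open>T\<close> coefficients is reported by about \<open>N / T\<close> users, so exponential-moment tail bounds
  and a union bound over the coefficients give, with probability \<open>1 / 2\<close>,
  \<open>M = O(sqrt (T ln T / N) / \<epsilon>)\<close>; finally \<open>2 ^ k * sqrt T = O((2 d) powr (k / 2))\<close>.\<close>

lemma p_r_pos: "0 < p_r e"
  and p_r_less_1: "p_r e < 1"
  unfolding p_r_def by (auto simp: divide_simps add_pos_pos)

lemma sgn_coef_cases: "sgn_coef J l = 1 \<or> sgn_coef J l = -1"
  unfolding sgn_coef_def by (cases "even (card (J \<inter> l))") auto

lemma of_int_sgn_coef: "real_of_int (sgn_coef J l) = (-1) ^ card (J \<inter> l)"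
  unfolding sgn_coef_def by simp

definition randomized_response_prob :: "real \<Rightarrow> int \<Rightarrow> int \<Rightarrow> real" where
  "randomized_response_prob e s v = (if v = s then p_r e else if v = - s then 1 - p_r e else 0)"

lemma pmf_inpht_user:
  "pmf (inpht_user d k e J) (l, v) = pmf (pmf_of_set (coef_set d k)) l * randomized_response_prob e (sgn_coef J l) v"
proof -
  define s where "s = sgn_coef J l"
  let ?rr = "\<lambda>l'. map_pmf (\<lambda>b. (l', if b then sgn_coef J l' else - sgn_coef J l')) (bernoulli_pmf (p_r e))"
  have off_diagonal: "pmf (?rr l') (l, v) = 0" if "l' \<noteq> l" for l'
    using that by (auto simp: pmf_eq_0_set_pmf)
  have "s \<noteq> - s" using sgn_coef_cases[of J l] unfolding s_def by auto
  have "pmf (?rr l) (l, v) = measure_pmf.prob (bernoulli_pmf (p_r e)) {b. (if b then s else - s) = v}"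
    by (simp add: pmf_map vimage_def s_def)
  also have "\<dots> = randomized_response_prob e s v"
  proof -
    consider "v = s" | "v = - s" | "v \<noteq> s" "v \<noteq> - s" by blast
    then show ?thesis
    proof cases
      case 1
      then have "{b. (if b then s else - s) = v} = {True}" using \<open>s \<noteq> - s\<close> by auto
      then show ?thesis using 1 p_r_pos[of e] p_r_less_1[of e] by (simp add: measure_pmf_single randomized_response_prob_def)
    next
      case 2
      then have "{b. (if b then s else - s) = v} = {False}" using \<open>s \<noteq> - s\<close> by auto
      then show ?thesis using 2 \<open>s \<noteq> - s\<close> p_r_pos[of e] p_r_less_1[of e]
        by (simp add: measure_pmf_single randomized_response_prob_def)
    qed (simp_all add: randomized_response_prob_def)
  qed
  finally have diagonal: "pmf (?rr l) (l, v) = randomized_response_prob e s v" .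
  have "pmf (inpht_user d k e J) (l, v) = (\<integral>l'. pmf (?rr l') (l, v) \<partial>pmf_of_set (coef_set d k))"
    unfolding inpht_user_def pmf_bind by simp
  also have "\<dots> = (\<Sum>l'\<in>{l}. pmf (?rr l') (l, v) * pmf (pmf_of_set (coef_set d k)) l')"
    by (rule integral_measure_pmf_real) (use off_diagonal in auto)
  finally show ?thesis using diagonal by (simp add: s_def)
qed

lemma randomized_response_prob_ratio_le:
  assumes "0 < e" "\<bar>s\<bar> = 1" "\<bar>s'\<bar> = 1"
  shows "randomized_response_prob e s v \<le> exp e * randomized_response_prob e s' v"
proof -
  have "0 < 1 + exp e" by (simp add: add_pos_pos)
  then have p_r_eq: "p_r e = exp e * (1 - p_r e)"
    unfolding p_r_def by (simp add: field_simps)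
  have "1 \<le> exp e" using assms(1) by simp
  then have same: "p_r e \<le> exp e * p_r e" "1 - p_r e \<le> exp e * (1 - p_r e)"
    using p_r_pos[of e] p_r_less_1[of e] by simp_all
  then have flip: "1 - p_r e \<le> exp e * p_r e"
    using p_r_eq by (metis order_trans)
  have "s' = s \<or> s' = - s" "s \<noteq> - s" using assms(2,3) by auto
  then show ?thesis unfolding randomized_response_prob_def using same flip p_r_eq by auto
qed

lemma inpht_user_LDP:
  assumes "0 < \<epsilon>"
  shows "is_LDP \<epsilon> X (inpht_user d k \<epsilon>)"
  unfolding is_LDP_def
proof (intro ballI allI)
  fix x x' and R :: "nat set \<times> int"
  obtain l v where R: "R = (l, v)" by (cases R)
  have "\<bar>sgn_coef J l\<bar> = 1" for J using sgn_coef_cases[of J l] by auto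
  then have "randomized_response_prob \<epsilon> (sgn_coef x l) v \<le> exp \<epsilon> * randomized_response_prob \<epsilon> (sgn_coef x' l) v"
    using randomized_response_prob_ratio_le[OF assms] by simp
  then show "pmf (inpht_user d k \<epsilon> x) R \<le> exp \<epsilon> * pmf (inpht_user d k \<epsilon> x') R"
    unfolding R pmf_inpht_user by (metis mult_left_mono pmf_nonneg mult.left_commute)
qed

lemma exp_le_quadratic:
  fixes y :: real
  assumes "\<bar>y\<bar> \<le> 1"
  shows "exp y \<le> 1 + y + y\<^sup>2"
proof (cases "0 \<le> y")
  case True
  then show ?thesis using exp_bound[of y] assms by auto
next
  case False
  define z where "z = - y"
  have z: "0 \<le> z" "z \<le> 1" using False assms unfolding z_def by auto
  have "0 < 1 - z + z\<^sup>2"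
    using z by (cases "z < 1") (auto simp: add_pos_nonneg)
  moreover have "1 + z + z\<^sup>2 / 2 \<le> exp z" using exp_lower_Taylor_quadratic z by simp
  ultimately have "(1 + z + z\<^sup>2 / 2) * (1 - z + z\<^sup>2) \<le> exp z * (1 - z + z\<^sup>2)"
    by (intro mult_right_mono) auto
  moreover have "(1 + z + z\<^sup>2 / 2) * (1 - z + z\<^sup>2) = 1 + z\<^sup>2 / 2 + z ^ 3 / 2 + z ^ 4 / 2"
    by (simp add: power2_eq_square power3_eq_cube power4_eq_xxxx field_simps)
  moreover have "0 \<le> z\<^sup>2 / 2 + z ^ 3 / 2 + z ^ 4 / 2" using z by simp
  ultimately have "1 \<le> exp z * (1 - z + z\<^sup>2)" by linarith
  then have "exp (- z) \<le> 1 - z + z\<^sup>2" by (simp add: exp_minus field_simps)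
  then show ?thesis unfolding z_def by simp
qed

lemma expectation_exp_centered_le:
  fixes p :: "'a pmf" and f :: "'a \<Rightarrow> real"
  assumes fin: "finite (set_pmf p)"
    and bounded: "\<And>x. x \<in> set_pmf p \<Longrightarrow> \<bar>f x\<bar> \<le> 1"
    and second_moment: "measure_pmf.expectation p (\<lambda>x. (f x)\<^sup>2) \<le> s"
    and l: "0 \<le> l" "l \<le> 1"
  shows "measure_pmf.expectation p (\<lambda>x. exp (l * (f x - measure_pmf.expectation p f)))
         \<le> exp (l\<^sup>2 * s)"
proof -
  define m where "m = measure_pmf.expectation p f"
  have int: "integrable (measure_pmf p) h" for h :: "'a \<Rightarrow> real"
    using fin by (rule integrable_measure_pmf_finite)
  have "measure_pmf.expectation p (\<lambda>x. exp (l * f x))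
        \<le> measure_pmf.expectation p (\<lambda>x. 1 + l * f x + l\<^sup>2 * (f x)\<^sup>2)"
  proof (rule integral_mono_AE[OF int int], rule AE_pmfI)
    fix x assume "x \<in> set_pmf p"
    then have "\<bar>l * f x\<bar> \<le> 1" using bounded l by (simp add: abs_mult mult_le_one)
    from exp_le_quadratic[OF this] show "exp (l * f x) \<le> 1 + l * f x + l\<^sup>2 * (f x)\<^sup>2"
      by (simp add: power_mult_distrib)
  qed
  also have "\<dots> = 1 + l * m + l\<^sup>2 * measure_pmf.expectation p (\<lambda>x. (f x)\<^sup>2)"
    unfolding m_def using int by simp
  also have "\<dots> \<le> 1 + (l * m + l\<^sup>2 * s)"
    using second_moment by (simp add: mult_left_mono)
  also have "\<dots> \<le> exp (l * m + l\<^sup>2 * s)"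
    by (rule exp_ge_add_one_self)
  finally have "measure_pmf.expectation p (\<lambda>x. exp (l * f x)) \<le> exp (l * m + l\<^sup>2 * s)" .
  then have "exp (- (l * m)) * measure_pmf.expectation p (\<lambda>x. exp (l * f x))
             \<le> exp (- (l * m)) * exp (l * m + l\<^sup>2 * s)"
    by (simp add: mult_left_mono)
  then show ?thesis
    unfolding m_def[symmetric] by (simp add: right_diff_distrib exp_diff exp_minus field_simps exp_add)
qed

lemma prob_Pi_pmf_sum_deviation_ge:
  fixes ps :: "nat \<Rightarrow> 'a pmf" and f :: "nat \<Rightarrow> 'a \<Rightarrow> real"
  assumes fin: "\<And>i. i < N \<Longrightarrow> finite (set_pmf (ps i))"
    and bounded: "\<And>i x. i < N \<Longrightarrow> x \<in> set_pmf (ps i) \<Longrightarrow> \<bar>f i x\<bar> \<le> 1"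
    and second_moment: "\<And>i. i < N \<Longrightarrow> measure_pmf.expectation (ps i) (\<lambda>x. (f i x)\<^sup>2) \<le> s"
    and l: "0 \<le> l" "l \<le> 1"
  shows "measure_pmf.prob (Pi_pmf {..<N} dflt ps)
           {R. a \<le> (\<Sum>i<N. f i (R i) - measure_pmf.expectation (ps i) (f i))}
         \<le> exp (- l * a + l\<^sup>2 * (real N * s))"
proof -
  define m where "m i = measure_pmf.expectation (ps i) (f i)" for i
  define P where "P = Pi_pmf {..<N} dflt ps"
  define U where "U R = (\<Prod>i<N. exp (l * (f i (R i) - m i)))" for R
  have fin_P: "finite (set_pmf P)"
    unfolding P_def set_Pi_pmf[OF finite_lessThan] by (rule finite_PiE_dflt) (simp_all add: fin)
  have "measure_pmf.expectation P U
        = (\<Prod>i<N. measure_pmf.expectation (ps i) (\<lambda>x. exp (l * (f i x - m i))))"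
    unfolding P_def U_def
    by (rule expectation_prod_Pi_pmf) (auto intro: integrable_measure_pmf_finite fin)
  also have "\<dots> \<le> (\<Prod>i<N. exp (l\<^sup>2 * s))"
    unfolding m_def
    by (intro prod_mono conjI expectation_exp_centered_le fin bounded second_moment l) auto
  also have "\<dots> = exp (l\<^sup>2 * (real N * s))"
    by (simp add: exp_of_nat_mult[symmetric] algebra_simps)
  finally have EU: "measure_pmf.expectation P U \<le> exp (l\<^sup>2 * (real N * s))" .
  have "{R. a \<le> (\<Sum>i<N. f i (R i) - m i)} \<subseteq> {R. exp (l * a) \<le> U R}"
  proof
    fix R assume "R \<in> {R. a \<le> (\<Sum>i<N. f i (R i) - m i)}"
    then have "exp (l * a) \<le> exp (l * (\<Sum>i<N. f i (R i) - m i))"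
      using l by (simp add: mult_left_mono)
    then show "R \<in> {R. exp (l * a) \<le> U R}"
      unfolding U_def by (simp add: sum_distrib_left exp_sum)
  qed
  then have "measure_pmf.prob P {R. a \<le> (\<Sum>i<N. f i (R i) - m i)}
             \<le> measure_pmf.prob P {R. exp (l * a) \<le> U R}"
    by (rule measure_pmf.finite_measure_mono) simp
  also have "\<dots> \<le> measure_pmf.expectation P U / exp (l * a)"
  proof -
    have "integrable (measure_pmf P) U" using fin_P by (rule integrable_measure_pmf_finite)
    moreover have "AE R in measure_pmf P. 0 \<le> U R" unfolding U_def by (simp add: prod_nonneg)
    ultimately show ?thesis
      using integral_Markov_inequality_measure[of P U "{}" "exp (l * a)"] by simp
  qed
  also have "\<dots> \<le> exp (l\<^sup>2 * (real N * s)) / exp (l * a)"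
    using EU by (simp add: divide_right_mono)
  finally show ?thesis unfolding P_def m_def by (simp add: exp_diff[symmetric])
qed

lemma prob_Pi_pmf_abs_sum_deviation_ge:
  fixes ps :: "nat \<Rightarrow> 'a pmf" and f :: "nat \<Rightarrow> 'a \<Rightarrow> real"
  assumes fin: "\<And>i. i < N \<Longrightarrow> finite (set_pmf (ps i))"
    and bounded: "\<And>i x. i < N \<Longrightarrow> x \<in> set_pmf (ps i) \<Longrightarrow> \<bar>f i x\<bar> \<le> 1"
    and second_moment: "\<And>i. i < N \<Longrightarrow> measure_pmf.expectation (ps i) (\<lambda>x. (f i x)\<^sup>2) \<le> s"
    and l: "0 \<le> l" "l \<le> 1"
  shows "measure_pmf.prob (Pi_pmf {..<N} dflt ps)
           {R. a \<le> \<bar>\<Sum>i<N. f i (R i) - measure_pmf.expectation (ps i) (f i)\<bar>}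
         \<le> 2 * exp (- l * a + l\<^sup>2 * (real N * s))"
proof -
  let ?P = "Pi_pmf {..<N} dflt ps"
  let ?D = "\<lambda>g. {R. a \<le> (\<Sum>i<N. g i (R i) - measure_pmf.expectation (ps i) (g i))}"
  have neg: "(\<Sum>i<N. - f i (R i) - measure_pmf.expectation (ps i) (\<lambda>x. - f i x))
             = - (\<Sum>i<N. f i (R i) - measure_pmf.expectation (ps i) (f i))" for R
    by (simp add: sum_subtractf sum_negf)
  have "a \<le> \<bar>S\<bar> \<longleftrightarrow> a \<le> S \<or> a \<le> - S" for S :: real by auto
  then have "{R. a \<le> \<bar>\<Sum>i<N. f i (R i) - measure_pmf.expectation (ps i) (f i)\<bar>}
        = ?D f \<union> ?D (\<lambda>i x. - f i x)"
    unfolding neg by blast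
  then have "measure_pmf.prob ?P {R. a \<le> \<bar>\<Sum>i<N. f i (R i) - measure_pmf.expectation (ps i) (f i)\<bar>}
             \<le> measure_pmf.prob ?P (?D f) + measure_pmf.prob ?P (?D (\<lambda>i x. - f i x))"
    by (simp add: measure_Un_le)
  moreover have "measure_pmf.prob ?P (?D f) \<le> exp (- l * a + l\<^sup>2 * (real N * s))"
    by (rule prob_Pi_pmf_sum_deviation_ge[OF assms])
  moreover have "measure_pmf.prob ?P (?D (\<lambda>i x. - f i x)) \<le> exp (- l * a + l\<^sup>2 * (real N * s))"
    by (rule prob_Pi_pmf_sum_deviation_ge[OF fin _ _ l]) (use bounded second_moment in auto)
  ultimately show ?thesis by simp
qed

lemma sum_Pow_neg_one_card_Int:
  assumes "finite \<beta>"
  shows "(\<Sum>\<alpha>\<in>Pow \<beta>. (-1::real) ^ (card (A \<inter> \<alpha>) + card (B \<inter> \<alpha>)))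
         = (if A \<inter> \<beta> = B \<inter> \<beta> then 2 ^ card \<beta> else 0)"
  using assms
proof (induction \<beta> rule: finite_induct)
  case empty
  then show ?case by simp
next
  case (insert x F)
  let ?f = "\<lambda>\<alpha>. (-1::real) ^ (card (A \<inter> \<alpha>) + card (B \<inter> \<alpha>))"
  have fin: "finite (Pow F)" using insert by simp
  have disj: "Pow F \<inter> insert x ` Pow F = {}" using insert by auto
  have inj: "inj_on (insert x) (Pow F)"
  proof (rule inj_onI)
    fix a b assume "a \<in> Pow F" "b \<in> Pow F" "insert x a = insert x b"
    then show "a = b" using insert(2) by (metis Diff_insert_absorb PowD subsetD)
  qed
  have ins: "?f (insert x \<alpha>) = (if x \<in> A then -1 else 1) * (if x \<in> B then -1 else 1) * ?f \<alpha>"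
    if "\<alpha> \<in> Pow F" for \<alpha>
  proof -
    have xa: "x \<notin> \<alpha>" "finite \<alpha>" using that insert finite_subset by auto
    have cA: "card (A \<inter> insert x \<alpha>) = (if x \<in> A then Suc (card (A \<inter> \<alpha>)) else card (A \<inter> \<alpha>))"
      using xa by (auto simp: Int_insert_right)
    have cB: "card (B \<inter> insert x \<alpha>) = (if x \<in> B then Suc (card (B \<inter> \<alpha>)) else card (B \<inter> \<alpha>))"
      using xa by (auto simp: Int_insert_right)
    show ?thesis unfolding cA cB by (simp add: power_add)
  qed
  have "(\<Sum>\<alpha>\<in>Pow (insert x F). ?f \<alpha>) = (\<Sum>\<alpha>\<in>Pow F. ?f \<alpha>) + (\<Sum>\<alpha>\<in>insert x ` Pow F. ?f \<alpha>)"
    unfolding Pow_insert using fin disj by (intro sum.union_disjoint) auto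
  also have "(\<Sum>\<alpha>\<in>insert x ` Pow F. ?f \<alpha>) = (\<Sum>\<alpha>\<in>Pow F. ?f (insert x \<alpha>))"
    using inj by (rule sum.reindex[unfolded comp_def])
  also have "\<dots> = (if x \<in> A then -1 else 1) * (if x \<in> B then -1 else 1) * (\<Sum>\<alpha>\<in>Pow F. ?f \<alpha>)"
    using ins by (simp add: sum_distrib_left)
  finally have eq: "(\<Sum>\<alpha>\<in>Pow (insert x F). ?f \<alpha>) = (1 + (if x \<in> A then -1 else 1) * (if x \<in> B then -1 else 1)) * (\<Sum>\<alpha>\<in>Pow F. ?f \<alpha>)"
    by (simp add: algebra_simps)
  have iff: "(A \<inter> insert x F = B \<inter> insert x F) \<longleftrightarrow> ((x \<in> A \<longleftrightarrow> x \<in> B) \<and> A \<inter> F = B \<inter> F)"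
    by blast
  show ?case unfolding eq insert.IH iff using insert by auto
qed

lemma card_marginal_fiber:
  assumes "\<beta> \<subseteq> {..<d}" "\<gamma> \<subseteq> \<beta>"
  shows "card {\<eta>\<in>Pow {..<d}. \<eta> \<inter> \<beta> = \<gamma>} = 2 ^ (d - card \<beta>)"
proof -
  have eq: "{\<eta>\<in>Pow {..<d}. \<eta> \<inter> \<beta> = \<gamma>} = (\<lambda>\<rho>. \<rho> \<union> \<gamma>) ` Pow ({..<d} - \<beta>)"
  proof
    show "{\<eta> \<in> Pow {..<d}. \<eta> \<inter> \<beta> = \<gamma>} \<subseteq> (\<lambda>\<rho>. \<rho> \<union> \<gamma>) ` Pow ({..<d} - \<beta>)"
    proof
      fix \<eta> assume h: "\<eta> \<in> {\<eta> \<in> Pow {..<d}. \<eta> \<inter> \<beta> = \<gamma>}"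
      then have "\<eta> = (\<eta> - \<beta>) \<union> \<gamma>" "\<eta> - \<beta> \<in> Pow ({..<d} - \<beta>)" by auto
      then show "\<eta> \<in> (\<lambda>\<rho>. \<rho> \<union> \<gamma>) ` Pow ({..<d} - \<beta>)" by blast
    qed
  qed (use assms in auto)
  have inj: "inj_on (\<lambda>\<rho>. \<rho> \<union> \<gamma>) (Pow ({..<d} - \<beta>))"
  proof (rule inj_onI)
    fix x y assume "x \<in> Pow ({..<d} - \<beta>)" "y \<in> Pow ({..<d} - \<beta>)" "x \<union> \<gamma> = y \<union> \<gamma>"
    then have "(x \<union> \<gamma>) - \<beta> = x" "(y \<union> \<gamma>) - \<beta> = y" using assms by auto
    then show "x = y" using \<open>x \<union> \<gamma> = y \<union> \<gamma>\<close> by metis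
  qed
  have "card ({..<d} - \<beta>) = d - card \<beta>"
    using assms by (simp add: card_Diff_subset finite_subset)
  then show ?thesis unfolding eq card_image[OF inj] by (simp add: card_Pow)
qed

lemma sum_card_marginal_fibers:
  "(\<Sum>\<gamma>\<in>Pow {..<d}. real (card {\<eta>\<in>Pow {..<(d::nat)}. \<eta> \<inter> \<beta> = \<gamma>})) = 2 ^ d"
proof -
  have "(\<Sum>\<gamma>\<in>Pow {..<d}. real (card {\<eta>\<in>Pow {..<d}. \<eta> \<inter> \<beta> = \<gamma>}))
      = (\<Sum>\<gamma>\<in>Pow {..<d}. \<Sum>\<eta>\<in>Pow {..<d}. if \<eta> \<inter> \<beta> = \<gamma> then 1 else 0)"
    by (simp add: sum.inter_filter[symmetric])
  also have "\<dots> = (\<Sum>\<eta>\<in>Pow {..<d}. \<Sum>\<gamma>\<in>Pow {..<d}. if \<eta> \<inter> \<beta> = \<gamma> then 1 else 0)"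
    by (rule sum.swap)
  also have "\<dots> = (\<Sum>\<eta>\<in>Pow {..<d}. (1::real))"
    by (intro sum.cong refl) auto
  also have "\<dots> = 2 ^ d" by (simp add: card_Pow)
  finally show ?thesis .
qed

lemma hadamard_marginal_kernel:
  assumes "\<beta> \<subseteq> {..<d}"
  shows "(\<Sum>\<alpha>\<in>Pow \<beta>. (-1::real) ^ card (J \<inter> \<alpha>) * (\<Sum>\<eta>\<in>{\<eta>\<in>Pow {..<d}. \<eta> \<inter> \<beta> = \<gamma>}. (-1) ^ card (\<alpha> \<inter> \<eta>)))
         = (if J \<inter> \<beta> = \<gamma> then 2 ^ d else 0)"
proof -
  let ?E = "{\<eta>\<in>Pow {..<d}. \<eta> \<inter> \<beta> = \<gamma>}"
  have finb: "finite \<beta>" using assms finite_subset by blast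
  have "(\<Sum>\<alpha>\<in>Pow \<beta>. (-1::real) ^ card (J \<inter> \<alpha>) * (\<Sum>\<eta>\<in>?E. (-1) ^ card (\<alpha> \<inter> \<eta>)))
      = (\<Sum>\<alpha>\<in>Pow \<beta>. \<Sum>\<eta>\<in>?E. (-1::real) ^ (card (J \<inter> \<alpha>) + card (\<eta> \<inter> \<alpha>)))"
    by (simp add: sum_distrib_left power_add Int_commute)
  also have "\<dots> = (\<Sum>\<eta>\<in>?E. \<Sum>\<alpha>\<in>Pow \<beta>. (-1::real) ^ (card (J \<inter> \<alpha>) + card (\<eta> \<inter> \<alpha>)))"
    by (rule sum.swap)
  also have "\<dots> = (\<Sum>\<eta>\<in>?E. if J \<inter> \<beta> = \<gamma> then 2 ^ card \<beta> else 0)"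
    by (intro sum.cong refl) (simp add: sum_Pow_neg_one_card_Int[OF finb])
  also have "\<dots> = (if J \<inter> \<beta> = \<gamma> then 2 ^ d else 0)"
  proof (cases "J \<inter> \<beta> = \<gamma>")
    case True
    then have g: "\<gamma> \<subseteq> \<beta>" by blast
    have cb: "card \<beta> \<le> d" using assms by (metis card_lessThan card_mono finite_lessThan)
    have "(\<Sum>\<eta>\<in>?E. (2::real) ^ card \<beta>) = 2 ^ card \<beta> * 2 ^ (d - card \<beta>)"
      using card_marginal_fiber[OF assms g] by simp
    also have "\<dots> = 2 ^ d" using cb by (simp add: power_add[symmetric])
    finally show ?thesis using True by simp
  qed simp
  finally show ?thesis .
qed

lemma hadamard_scale_sq: "(2::real) powr (- (real d / 2)) * 2 powr (- (real d / 2)) = 1 / 2 ^ d"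
proof -
  have "(2::real) powr (- (real d / 2)) * 2 powr (- (real d / 2)) = 2 powr (- real d)"
    by (subst powr_add[symmetric]) simp
  also have "\<dots> = 1 / 2 ^ d" by (simp add: powr_minus powr_realpow divide_inverse)
  finally show ?thesis .
qed

text \<open>The Hadamard coefficient \<open>\<theta>\<^sub>\<alpha>\<close> of \<open>hist N j\<close> is
  \<open>2 powr (- (real d / 2)) * coef_mean N j \<alpha>\<close>.\<close>

definition coef_mean :: "nat \<Rightarrow> (nat \<Rightarrow> nat set) \<Rightarrow> nat set \<Rightarrow> real" where
  "coef_mean N j \<alpha> = (\<Sum>i<N. (-1) ^ card (j i \<inter> \<alpha>)) / real N"

lemma abs_coef_mean_le: "\<bar>coef_mean N j \<alpha>\<bar> \<le> 1"
proof -
  have "\<bar>\<Sum>i<N. (-1::real) ^ card (j i \<inter> \<alpha>)\<bar> \<le> (\<Sum>i<N. \<bar>(-1::real) ^ card (j i \<inter> \<alpha>)\<bar>)"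
    by (rule sum_abs)
  then show ?thesis unfolding coef_mean_def by (cases "N = 0") (simp_all add: divide_le_eq)
qed

lemma marginal_hist_eq_recon_marginal:
  assumes j: "\<forall>i<N. j i \<subseteq> {..<d}" and \<beta>: "\<beta> \<subseteq> {..<d}"
  shows "marginal d (hist N j) \<beta> \<gamma>
         = recon_marginal d (\<lambda>\<alpha>. 2 powr (- (real d / 2)) * coef_mean N j \<alpha>) \<beta> \<gamma>"
proof -
  define E where "E = {\<eta>\<in>Pow {..<d}. \<eta> \<inter> \<beta> = \<gamma>}"
  define c where "c = (2::real) powr (- (real d / 2))"
  define hits where "hits = (\<Sum>i<N. if j i \<inter> \<beta> = \<gamma> then 1 else 0 :: real)"
  have "marginal d (hist N j) \<beta> \<gamma> = (\<Sum>\<eta>\<in>E. \<Sum>i<N. if j i = \<eta> then 1 else 0) / real N"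
    unfolding marginal_def hist_def E_def
    by (simp add: sum.inter_filter[symmetric] sum_divide_distrib)
  also have "\<dots> = hits / real N"
    unfolding hits_def using j
    by (subst sum.swap) (auto intro!: sum.cong simp: E_def)
  finally have marginal_eq: "marginal d (hist N j) \<beta> \<gamma> = hits / real N" .
  have kernel: "(\<Sum>\<eta>\<in>E. had d \<alpha> \<eta>) = c * (\<Sum>\<eta>\<in>E. (-1) ^ card (\<alpha> \<inter> \<eta>))" for \<alpha>
    unfolding had_def c_def by (simp add: sum_distrib_left)
  have "recon_marginal d (\<lambda>\<alpha>. c * coef_mean N j \<alpha>) \<beta> \<gamma>
      = c * c / real N * (\<Sum>i<N. \<Sum>\<alpha>\<in>Pow \<beta>. (-1) ^ card (j i \<inter> \<alpha>)
                                  * (\<Sum>\<eta>\<in>E. (-1) ^ card (\<alpha> \<inter> \<eta>)))"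
    unfolding recon_marginal_def coef_mean_def E_def[symmetric] kernel
    by (subst sum.swap) (simp add: sum_distrib_left sum_distrib_right sum_divide_distrib mult_ac)
  also have "\<dots> = c * c / real N * (\<Sum>i<N. if j i \<inter> \<beta> = \<gamma> then 2 ^ d else 0)"
    unfolding E_def hadamard_marginal_kernel[OF \<beta>] ..
  also have "(\<Sum>i<N. if j i \<inter> \<beta> = \<gamma> then (2::real) ^ d else 0) = 2 ^ d * hits"
    unfolding hits_def sum_distrib_left by (intro sum.cong) auto
  also have "c * c / real N * (2 ^ d * hits) = hits / real N"
    unfolding c_def hadamard_scale_sq by simp
  finally show ?thesis unfolding marginal_eq c_def by simp
qed

lemma finite_coef_set: "finite (coef_set d k)"
  unfolding coef_set_def by (rule finite_subset[of _ "Pow {..<d}"]) auto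

lemma coef_set_not_empty: "1 \<le> k \<Longrightarrow> k \<le> d \<Longrightarrow> coef_set d k \<noteq> {}"
proof -
  assume "1 \<le> k" "k \<le> d"
  then have "{0} \<in> coef_set d k" unfolding coef_set_def by auto
  then show ?thesis by blast
qed

lemma card_coef_set: "card (coef_set d k) = num_coefs d k"
proof -
  have eq: "coef_set d k = (\<Union>l\<in>{1..k}. {B. B \<subseteq> {..<d} \<and> card B = l})"
    unfolding coef_set_def by auto
  have "card (coef_set d k) = (\<Sum>l\<in>{1..k}. card {B. B \<subseteq> {..<d} \<and> card B = l})"
    unfolding eq by (rule card_UN_disjoint) (auto intro: finite_subset[of _ "Pow {..<d}"])
  also have "\<dots> = num_coefs d k"
    unfolding num_coefs_def by (intro sum.cong refl) (simp add: n_subsets)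
  finally show ?thesis .
qed

lemma one_le_num_coefs: "1 \<le> k \<Longrightarrow> k \<le> d \<Longrightarrow> 1 \<le> num_coefs d k"
  using finite_coef_set coef_set_not_empty[of k d]
  by (simp add: card_coef_set[symmetric] Suc_le_eq card_gt_0_iff)

lemma sum_two_pow_div_fact_le_exp2:
  assumes "finite I"
  shows "(\<Sum>l\<in>I. (2::real) ^ l / fact l) \<le> exp 2"
proof -
  have s: "(\<lambda>n. (2::real) ^ n / fact n) sums exp 2"
    using exp_converges[of "2::real"] by (simp add: divide_inverse_commute scaleR_conv_of_real)
  have "(\<Sum>l\<in>I. (2::real) ^ l / fact l) \<le> suminf (\<lambda>n. (2::real) ^ n / fact n)"
    by (rule sum_le_suminf) (use s assms in \<open>auto simp: sums_iff\<close>)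
  then show ?thesis using s by (simp add: sums_iff)
qed

lemma two_pow_num_coefs_le:
  assumes "1 \<le> k" "k \<le> d"
  shows "2 ^ k * real (num_coefs d k) \<le> exp 2 * real d ^ k"
proof -
  have trm: "2 ^ k * real (d choose l) \<le> real d ^ k * (2 ^ l / fact l)" if l: "l \<in> {1..k}" for l
  proof -
    have f: "real (d choose l) * fact l \<le> real d ^ l"
      using binomial_fact_pow[of d l] by (metis of_nat_fact of_nat_le_iff of_nat_mult of_nat_power)
    have p: "(2::real) ^ (k - l) \<le> real d ^ (k - l)"
    proof (cases "d \<ge> 2")
      case True then show ?thesis by (intro power_mono) auto
    next
      case False then have "k - l = 0" using l assms by auto
      then show ?thesis by simp
    qed
    have kl: "k = l + (k - l)" using l by auto
    have "2 ^ k * real (d choose l) = 2 ^ l * 2 ^ (k - l) * real (d choose l)"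
      by (subst kl) (simp add: power_add)
    also have "\<dots> \<le> 2 ^ l * real d ^ (k - l) * (real d ^ l / fact l)"
      using f p by (intro mult_mono) (auto simp: field_simps)
    also have "\<dots> = real d ^ k * (2 ^ l / fact l)"
    proof -
      have "real d ^ k = real d ^ (k - l) * real d ^ l"
        by (subst kl) (simp add: power_add mult.commute)
      then show ?thesis by simp
    qed
    finally show ?thesis .
  qed
  have "2 ^ k * real (num_coefs d k) = (\<Sum>l\<in>{1..k}. 2 ^ k * real (d choose l))"
    unfolding num_coefs_def by (simp add: sum_distrib_left)
  also have "\<dots> \<le> (\<Sum>l\<in>{1..k}. real d ^ k * (2 ^ l / fact l))"
    by (rule sum_mono) (rule trm)
  also have "\<dots> = real d ^ k * (\<Sum>l\<in>{1..k}. 2 ^ l / fact l)"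
    by (simp add: sum_distrib_left)
  also have "\<dots> \<le> real d ^ k * exp 2"
    by (intro mult_left_mono sum_two_pow_div_fact_le_exp2) auto
  finally show ?thesis by (simp add: mult.commute)
qed

lemma set_pmf_inpht_user:
  assumes "1 \<le> k" "k \<le> d" "x \<in> set_pmf (inpht_user d k e J)"
  shows "x \<in> coef_set d k \<times> {1, -1}"
proof -
  obtain l v where x: "x = (l, v)" by (cases x)
  have "pmf (inpht_user d k e J) (l, v) \<noteq> 0" using assms(3) x by (simp add: set_pmf_iff)
  then have "l \<in> coef_set d k" "randomized_response_prob e (sgn_coef J l) v \<noteq> 0"
    unfolding pmf_inpht_user using finite_coef_set coef_set_not_empty[OF assms(1,2)] by (auto simp: indicator_def)
  then show ?thesis unfolding x randomized_response_prob_def using sgn_coef_cases[of J l] by (auto split: if_splits)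
qed

lemma finite_set_pmf_inpht_user: "1 \<le> k \<Longrightarrow> k \<le> d \<Longrightarrow> finite (set_pmf (inpht_user d k e J))"
  using set_pmf_inpht_user finite_coef_set by (metis finite.emptyI finite.insertI finite_SigmaI finite_subset subsetI)

lemma expectation_inpht_user:
  assumes "1 \<le> k" "k \<le> d"
  shows "measure_pmf.expectation (inpht_user d k e J) g =
     (\<Sum>l\<in>coef_set d k. p_r e * g (l, sgn_coef J l) + (1 - p_r e) * g (l, - sgn_coef J l)) / real (card (coef_set d k))"
proof -
  let ?A = "coef_set d k"
  let ?T = "real (card ?A)"
  have fin: "finite ?A" by (rule finite_coef_set)
  have ne: "?A \<noteq> {}" using coef_set_not_empty assms by blast
  have "measure_pmf.expectation (inpht_user d k e J) g = (\<Sum>x\<in>?A \<times> {1, -1}. g x * pmf (inpht_user d k e J) x)"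
    by (rule integral_measure_pmf_real) (use fin set_pmf_inpht_user[OF assms] in auto)
  also have "\<dots> = (\<Sum>l\<in>?A. \<Sum>v\<in>{1, -1}. g (l, v) * pmf (inpht_user d k e J) (l, v))"
    by (subst sum.cartesian_product) (simp add: case_prod_unfold)
  also have "\<dots> = (\<Sum>l\<in>?A. (p_r e * g (l, sgn_coef J l) + (1 - p_r e) * g (l, - sgn_coef J l)) / ?T)"
  proof (rule sum.cong[OF refl])
    fix l assume l: "l \<in> ?A"
    have pl: "pmf (pmf_of_set ?A) l = 1 / ?T" using l fin ne by simp
    have T0: "?T > 0" using fin ne by (simp add: card_gt_0_iff)
    show "(\<Sum>v\<in>{1, -1}. g (l, v) * pmf (inpht_user d k e J) (l, v)) =
          (p_r e * g (l, sgn_coef J l) + (1 - p_r e) * g (l, - sgn_coef J l)) / ?T"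
      unfolding pmf_inpht_user pl randomized_response_prob_def using sgn_coef_cases[of J l] T0
      by (elim disjE) (simp_all add: field_simps)
  qed
  also have "\<dots> = (\<Sum>l\<in>?A. p_r e * g (l, sgn_coef J l) + (1 - p_r e) * g (l, - sgn_coef J l)) / ?T"
    by (simp add: sum_divide_distrib)
  finally show ?thesis .
qed

lemma expectation_inpht_user_single:
  assumes "1 \<le> k" "k \<le> d" "\<alpha> \<in> coef_set d k" "\<And>l v. l \<noteq> \<alpha> \<Longrightarrow> g (l, v) = 0"
  shows "measure_pmf.expectation (inpht_user d k e J) g =
     (p_r e * g (\<alpha>, sgn_coef J \<alpha>) + (1 - p_r e) * g (\<alpha>, - sgn_coef J \<alpha>)) / real (card (coef_set d k))"
proof -
  have "(\<Sum>l\<in>coef_set d k. p_r e * g (l, sgn_coef J l) + (1 - p_r e) * g (l, - sgn_coef J l))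
      = (\<Sum>l\<in>coef_set d k. if l = \<alpha> then p_r e * g (\<alpha>, sgn_coef J \<alpha>) + (1 - p_r e) * g (\<alpha>, - sgn_coef J \<alpha>) else 0)"
    by (rule sum.cong[OF refl]) (auto simp: assms(4))
  also have "\<dots> = p_r e * g (\<alpha>, sgn_coef J \<alpha>) + (1 - p_r e) * g (\<alpha>, - sgn_coef J \<alpha>)"
    using assms(3) finite_coef_set by simp
  finally show ?thesis using expectation_inpht_user[OF assms(1,2), of e J g] by simp
qed

lemma p_r_margin_ge:
  assumes "0 < e" "e \<le> 1"
  shows "e / (exp 1 + 1) \<le> 2 * p_r e - 1"
proof -
  have ne: "0 < 1 + exp e" using exp_gt_zero[of e] by linarith
  have eq: "2 * p_r e - 1 = (exp e - 1) / (1 + exp e)"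
    unfolding p_r_def using ne by (simp add: field_simps)
  have "e / (exp 1 + 1) \<le> e / (1 + exp e)"
    using assms ne by (intro divide_left_mono) (auto intro!: mult_pos_pos add_pos_pos)
  also have "\<dots> \<le> (exp e - 1) / (1 + exp e)"
  proof (rule divide_right_mono)
    show "e \<le> exp e - 1" using exp_ge_add_one_self[of e] by linarith
  qed (use ne in simp)
  finally show ?thesis unfolding eq .
qed

lemma p_r_margin_pos: "0 < e \<Longrightarrow> 0 < 2 * p_r e - 1"
  unfolding p_r_def by (simp add: field_simps add_pos_pos)

lemma sqrt_ln_le:
  assumes "1 \<le> (T::real)"
  shows "sqrt (ln (6 * T)) \<le> 6 * (1 + ln T)"
proof -
  have "ln (6 * T) = ln 6 + ln T" using assms by (simp add: ln_mult)
  moreover have "ln (6::real) \<le> 5" using ln_le_minus_one[of 6] by simp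
  moreover have "sqrt (ln (6 * T)) \<le> (ln (6 * T) + 1) / 2"
    using arith_geo_mean_sqrt[of "ln (6 * T)" 1] assms by simp
  moreover have "0 \<le> ln T" using assms by simp
  ultimately show ?thesis by argo
qed

lemma sqrt_rescale:
  fixes x y L :: real
  assumes "0 < x" "0 < y"
  shows "sqrt (x * L / y) * y / x = sqrt (L * y / x)"
proof -
  have "sqrt (x * L / y) * y / x = sqrt x * sqrt L / sqrt y * (sqrt y * sqrt y) / (sqrt x * sqrt x)"
    using assms by (simp add: real_sqrt_mult real_sqrt_divide)
  also have "\<dots> = sqrt L * sqrt y / sqrt x"
    using assms by (simp add: field_simps)
  also have "\<dots> = sqrt (L * y / x)"
    by (simp add: real_sqrt_mult real_sqrt_divide)
  finally show ?thesis .
qed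

lemma two_pow_sqrt_num_coefs_le:
  assumes "1 \<le> k" "k \<le> d"
  shows "2 ^ k * sqrt (real (num_coefs d k)) \<le> exp 1 * (2 * real d) powr (real k / 2)"
proof -
  have d0: "0 < real d" using assms by simp
  have pw: "(2 * real d) powr (real k / 2) = sqrt (2 ^ k * real d ^ k)"
  proof -
    have "(2 * real d) powr (real k / 2) = ((2 * real d) powr real k) powr (1/2)"
      by (simp add: powr_powr)
    also have "\<dots> = sqrt ((2 * real d) ^ k)"
      using d0 by (simp add: powr_realpow powr_half_sqrt)
    finally show ?thesis by (simp add: power_mult_distrib)
  qed
  have e2: "exp (2::real) = exp 1 * exp 1" by (simp add: exp_add[symmetric])
  have "2 ^ k * sqrt (real (num_coefs d k)) = sqrt (2 ^ k * (2 ^ k * real (num_coefs d k)))"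
    by (simp add: real_sqrt_mult power_mult_distrib[symmetric] real_sqrt_power)
  also have "\<dots> \<le> sqrt (2 ^ k * (exp 1 * exp 1 * real d ^ k))"
    using two_pow_num_coefs_le[OF assms] e2 by (intro real_sqrt_le_mono mult_left_mono) auto
  also have "\<dots> = exp 1 * sqrt (2 ^ k * real d ^ k)"
    by (simp add: real_sqrt_mult algebra_simps)
  finally show ?thesis unfolding pw .
qed

lemma marginal_l1_err_le:
  assumes j: "\<forall>i<N. j i \<subseteq> {..<d}" and \<beta>: "\<beta> \<subseteq> {..<d}"
    and coef_err: "\<And>\<alpha>. \<alpha> \<subseteq> \<beta> \<Longrightarrow>
      \<bar>theta_hat d e N R \<alpha> - 2 powr (- (real d / 2)) * coef_mean N j \<alpha>\<bar> \<le> 2 powr (- (real d / 2)) * M"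
  shows "marginal_l1_err d e N j R \<beta> \<le> 2 ^ card \<beta> * M"
proof -
  define c :: real where "c = 2 powr (- (real d / 2))"
  define \<theta> where "\<theta> \<alpha> = c * coef_mean N j \<alpha>" for \<alpha>
  define E where "E \<gamma> = {\<eta>\<in>Pow {..<d}. \<eta> \<inter> \<beta> = \<gamma>}" for \<gamma>
  have "0 < c" unfolding c_def by simp
  have fin_\<beta>: "finite \<beta>" using \<beta> finite_subset by blast
  have "0 \<le> c * M"
    using coef_err[of "{}"] unfolding c_def by (meson abs_ge_zero order_trans empty_subsetI)
  have kernel_le: "\<bar>\<Sum>\<eta>\<in>E \<gamma>. had d \<alpha> \<eta>\<bar> \<le> c * real (card (E \<gamma>))" for \<alpha> \<gamma>
  proof -
    have "\<bar>\<Sum>\<eta>\<in>E \<gamma>. had d \<alpha> \<eta>\<bar> \<le> (\<Sum>\<eta>\<in>E \<gamma>. \<bar>had d \<alpha> \<eta>\<bar>)" by (rule sum_abs)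
    also have "\<dots> = (\<Sum>\<eta>\<in>E \<gamma>. c)"
      unfolding had_def c_def by (intro sum.cong refl) (simp add: abs_mult)
    finally show ?thesis by (simp add: mult.commute)
  qed
  have pointwise: "\<bar>marginal d (hist N j) \<beta> \<gamma> - recon_marginal d (theta_hat d e N R) \<beta> \<gamma>\<bar>
        \<le> 2 ^ card \<beta> * (c * M) * (c * real (card (E \<gamma>)))" for \<gamma>
  proof -
    have "marginal d (hist N j) \<beta> \<gamma> - recon_marginal d (theta_hat d e N R) \<beta> \<gamma>
        = (\<Sum>\<alpha>\<in>Pow \<beta>. (\<theta> \<alpha> - theta_hat d e N R \<alpha>) * (\<Sum>\<eta>\<in>E \<gamma>. had d \<alpha> \<eta>))"
      unfolding marginal_hist_eq_recon_marginal[OF j \<beta>] recon_marginal_def \<theta>_def c_def E_def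
      by (simp add: sum_subtractf left_diff_distrib)
    also have "\<bar>\<dots>\<bar> \<le> (\<Sum>\<alpha>\<in>Pow \<beta>. (c * M) * (c * real (card (E \<gamma>))))"
      unfolding abs_mult
      using coef_err kernel_le \<open>0 \<le> c * M\<close>
      by (intro order_trans[OF sum_abs] sum_mono)
        (auto intro!: mult_mono simp: abs_minus_commute \<theta>_def c_def abs_mult)
    also have "\<dots> = 2 ^ card \<beta> * (c * M) * (c * real (card (E \<gamma>)))"
      using fin_\<beta> by (simp add: card_Pow)
    finally show ?thesis .
  qed
  have "marginal_l1_err d e N j R \<beta>
        \<le> (\<Sum>\<gamma>\<in>Pow {..<d}. 2 ^ card \<beta> * (c * M) * (c * real (card (E \<gamma>))))"
    unfolding marginal_l1_err_def by (rule sum_mono) (rule pointwise)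
  also have "\<dots> = 2 ^ card \<beta> * M * (c * c) * (\<Sum>\<gamma>\<in>Pow {..<d}. real (card (E \<gamma>)))"
    by (simp add: sum_distrib_left algebra_simps)
  also have "\<dots> = 2 ^ card \<beta> * M"
    unfolding E_def sum_card_marginal_fibers c_def hadamard_scale_sq by simp
  finally show ?thesis .
qed

lemma theta_hat_error_le:
  fixes R :: "nat \<Rightarrow> nat set \<times> int" and N :: nat and \<alpha> :: "nat set" and e :: real
  defines "S \<equiv> {i\<in>{..<N}. fst (R i) = \<alpha>}" and "q \<equiv> 2 * p_r e - 1"
  assumes "\<alpha> \<noteq> {}" "0 < N" "0 < T" "0 < q"
    and count: "real N / (2 * T) < real (card S)"
    and deviation: "\<bar>\<Sum>i\<in>S. (real_of_int (snd (R i)) - q * \<mu>) / 2\<bar> < a"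
  shows "\<bar>theta_hat d e N R \<alpha> - 2 powr (- (real d / 2)) * \<mu>\<bar>
         \<le> 2 powr (- (real d / 2)) * (4 * a * T / (real N * q))"
proof -
  define c :: real where "c = 2 powr (- (real d / 2))"
  define X where "X = (\<Sum>i\<in>S. real_of_int (snd (R i)))"
  have "0 < c" unfolding c_def by simp
  have "0 < real N / (2 * T)" using assms by simp
  with count have "0 < real (card S)" by linarith
  then have "S \<noteq> {}" by auto
  have X_dev: "\<bar>X - q * \<mu> * real (card S)\<bar> < 2 * a"
    using deviation unfolding X_def by (simp add: sum_divide_distrib[symmetric] sum_subtractf mult_ac)
  have "theta_hat d e N R \<alpha> = c * (X / real (card S)) / q"
    unfolding theta_hat_def Let_def using assms(3) \<open>S \<noteq> {}\<close>
    unfolding S_def X_def c_def q_def by simp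
  then have "theta_hat d e N R \<alpha> - c * \<mu> = c * ((X - q * \<mu> * real (card S)) / (real (card S) * q))"
    using \<open>0 < real (card S)\<close> \<open>0 < q\<close> by (simp add: field_simps)
  then have "\<bar>theta_hat d e N R \<alpha> - c * \<mu>\<bar> = c * (\<bar>X - q * \<mu> * real (card S)\<bar> / (real (card S) * q))"
    using \<open>0 < c\<close> \<open>0 < real (card S)\<close> \<open>0 < q\<close> by (simp add: abs_mult)
  also have "\<dots> \<le> c * (2 * a / (real N / (2 * T) * q))"
    using X_dev count \<open>0 < c\<close> \<open>0 < q\<close> \<open>0 < real N / (2 * T)\<close>
    by (intro mult_left_mono frac_le mult_right_mono mult_pos_pos) auto
  also have "\<dots> = c * (4 * a * T / (real N * q))"
    using \<open>0 < T\<close> by (simp add: field_simps)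
  finally show ?thesis unfolding c_def .
qed

lemma sum_indicator_eq_card:
  "(\<Sum>i<(N::nat). if P i then 1 else 0 :: real) = real (card {i\<in>{..<N}. P i})"
  by (simp add: sum.inter_filter[symmetric])

lemma report_count_lower_tail:
  fixes d k N :: nat and e :: real and j :: "nat \<Rightarrow> nat set" and \<alpha> :: "nat set"
  defines "T \<equiv> real (num_coefs d k)"
  assumes "1 \<le> k" "k \<le> d" "\<alpha> \<in> coef_set d k"
  shows "measure_pmf.prob (inpht_reports d k e N j)
           {R. real (card {i\<in>{..<N}. fst (R i) = \<alpha>}) \<le> real N / (2 * T)}
         \<le> exp (- real N / (16 * T))"
proof -
  define hit :: "nat set \<times> int \<Rightarrow> real" where "hit x = (if fst x = \<alpha> then 1 else 0)" for x
  define ps where "ps i = inpht_user d k e (j i)" for i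
  have T_eq: "T = real (card (coef_set d k))" unfolding T_def card_coef_set ..
  have "0 < T"
    unfolding T_eq using finite_coef_set coef_set_not_empty[OF assms(2,3)] by (simp add: card_gt_0_iff)
  have mean: "measure_pmf.expectation (ps i) hit = 1 / T" for i
    unfolding ps_def T_eq
    by (subst expectation_inpht_user_single[OF assms(2-4)]) (auto simp: hit_def)
  have second_moment: "measure_pmf.expectation (ps i) (\<lambda>x. (- hit x)\<^sup>2) \<le> 1 / T" for i
    unfolding ps_def T_eq
    by (subst expectation_inpht_user_single[OF assms(2-4)]) (auto simp: hit_def)
  have count: "(\<Sum>i<N. hit (R i)) = real (card {i\<in>{..<N}. fst (R i) = \<alpha>})" for R
    unfolding hit_def by (rule sum_indicator_eq_card)
  have "(\<Sum>i<N. - hit (R i) - measure_pmf.expectation (ps i) (\<lambda>x. - hit x))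
        = real N / T - real (card {i\<in>{..<N}. fst (R i) = \<alpha>})" for R
    by (simp add: mean sum_subtractf count)
  moreover have "real N / T - real N / (2 * T) = real N / (2 * T)"
    using \<open>0 < T\<close> by (simp add: field_simps)
  ultimately have "{R. real (card {i\<in>{..<N}. fst (R i) = \<alpha>}) \<le> real N / (2 * T)}
        \<subseteq> {R. real N / (2 * T) \<le> (\<Sum>i<N. - hit (R i) - measure_pmf.expectation (ps i) (\<lambda>x. - hit x))}"
    by auto
  then have "measure_pmf.prob (inpht_reports d k e N j)
               {R. real (card {i\<in>{..<N}. fst (R i) = \<alpha>}) \<le> real N / (2 * T)}
             \<le> measure_pmf.prob (Pi_pmf {..<N} ({}, 0) ps)
               {R. real N / (2 * T) \<le> (\<Sum>i<N. - hit (R i) - measure_pmf.expectation (ps i) (\<lambda>x. - hit x))}"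
    unfolding inpht_reports_def ps_def by (rule measure_pmf.finite_measure_mono) simp
  also have "\<dots> \<le> exp (- (1 / 4) * (real N / (2 * T)) + (1 / 4)\<^sup>2 * (real N * (1 / T)))"
    using second_moment unfolding ps_def
    by (intro prob_Pi_pmf_sum_deviation_ge finite_set_pmf_inpht_user assms(2,3)) (auto simp: hit_def)
  also have "\<dots> = exp (- real N / (16 * T))"
    using \<open>0 < T\<close> by (simp add: field_simps power2_eq_square)
  finally show ?thesis .
qed

lemma real_mult_coef_mean: "real N * coef_mean N j \<alpha> = (\<Sum>i<N. (-1) ^ card (j i \<inter> \<alpha>))"
  unfolding coef_mean_def by (cases "N = 0") simp_all

lemma report_sum_deviation_tail:
  fixes d k N :: nat and e :: real and j :: "nat \<Rightarrow> nat set" and \<alpha> :: "nat set"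
  defines "T \<equiv> real (num_coefs d k)" and "q \<equiv> 2 * p_r e - 1" and "\<mu> \<equiv> coef_mean N j \<alpha>"
  assumes "1 \<le> k" "k \<le> d" "\<alpha> \<in> coef_set d k" "0 \<le> l" "l \<le> 1"
  shows "measure_pmf.prob (inpht_reports d k e N j)
           {R. a \<le> \<bar>\<Sum>i\<in>{i\<in>{..<N}. fst (R i) = \<alpha>}. (real_of_int (snd (R i)) - q * \<mu>) / 2\<bar>}
         \<le> 2 * exp (- l * a + l\<^sup>2 * (real N * (1 / T)))"
proof -
  define dev :: "nat set \<times> int \<Rightarrow> real"
    where "dev x = (if fst x = \<alpha> then (real_of_int (snd x) - q * \<mu>) / 2 else 0)" for x
  define ps where "ps i = inpht_user d k e (j i)" for i
  define s where "s i = real_of_int (sgn_coef (j i) \<alpha>)" for i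
  have T_eq: "T = real (card (coef_set d k))" unfolding T_def card_coef_set ..
  have "0 < T"
    unfolding T_eq using finite_coef_set coef_set_not_empty[OF assms(4,5)] by (simp add: card_gt_0_iff)
  have "0 < card (coef_set d k)" using \<open>0 < T\<close> unfolding T_eq by simp
  have s: "\<bar>s i\<bar> = 1" for i unfolding s_def using sgn_coef_cases[of "j i" \<alpha>] by auto
  have "\<bar>q\<bar> \<le> 1" unfolding q_def using p_r_pos[of e] p_r_less_1[of e] by simp
  then have q\<mu>: "\<bar>q * \<mu>\<bar> \<le> 1"
    unfolding \<mu>_def using abs_coef_mean_le by (simp add: abs_mult mult_le_one)
  have bounded: "\<bar>dev x\<bar> \<le> 1" if "x \<in> set_pmf (ps i)" for i x
  proof -
    have "snd x = 1 \<or> snd x = -1"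
      using set_pmf_inpht_user[OF assms(4,5) that[unfolded ps_def]] by auto
    then show ?thesis using q\<mu> unfolding dev_def by auto
  qed
  have mean: "measure_pmf.expectation (ps i) dev = q * (s i - \<mu>) / (2 * T)" for i
    unfolding ps_def T_eq
    by (subst expectation_inpht_user_single[OF assms(4-6)])
      (use \<open>0 < card (coef_set d k)\<close> in \<open>auto simp: dev_def s_def q_def field_simps\<close>)
  have second_moment: "measure_pmf.expectation (ps i) (\<lambda>x. (dev x)\<^sup>2) \<le> 1 / T" for i
  proof -
    have "((s i - q * \<mu>) / 2)\<^sup>2 \<le> 1" "((- s i - q * \<mu>) / 2)\<^sup>2 \<le> 1"
      using s[of i] q\<mu> by (simp_all add: abs_square_le_1)
    then have "p_r e * ((s i - q * \<mu>) / 2)\<^sup>2 + (1 - p_r e) * ((- s i - q * \<mu>) / 2)\<^sup>2 \<le> 1"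
      using p_r_pos[of e] p_r_less_1[of e] by (intro convex_bound_le) auto
    then show ?thesis
      unfolding ps_def T_eq
      by (subst expectation_inpht_user_single[OF assms(4-6)])
        (auto simp: dev_def s_def divide_right_mono)
  qed
  have "(\<Sum>i<N. measure_pmf.expectation (ps i) dev) = q / (2 * T) * ((\<Sum>i<N. s i) - real N * \<mu>)"
    unfolding mean by (simp add: sum_divide_distrib[symmetric] sum_distrib_left[symmetric] sum_subtractf)
  also have "\<dots> = 0"
    unfolding \<mu>_def real_mult_coef_mean s_def of_int_sgn_coef by simp
  finally have "(\<Sum>i<N. measure_pmf.expectation (ps i) dev) = 0" .
  moreover have "(\<Sum>i\<in>{i\<in>{..<N}. fst (R i) = \<alpha>}. (real_of_int (snd (R i)) - q * \<mu>) / 2)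
        = (\<Sum>i<N. dev (R i))" for R
    unfolding dev_def by (rule sum.inter_filter) simp
  ultimately have "(\<Sum>i\<in>{i\<in>{..<N}. fst (R i) = \<alpha>}. (real_of_int (snd (R i)) - q * \<mu>) / 2)
        = (\<Sum>i<N. dev (R i) - measure_pmf.expectation (ps i) dev)" for R
    by (simp add: sum_subtractf)
  then have "measure_pmf.prob (inpht_reports d k e N j)
               {R. a \<le> \<bar>\<Sum>i\<in>{i\<in>{..<N}. fst (R i) = \<alpha>}. (real_of_int (snd (R i)) - q * \<mu>) / 2\<bar>}
             = measure_pmf.prob (Pi_pmf {..<N} ({}, 0) ps)
               {R. a \<le> \<bar>\<Sum>i<N. dev (R i) - measure_pmf.expectation (ps i) dev\<bar>}"
    unfolding inpht_reports_def ps_def by simp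
  also have "\<dots> \<le> 2 * exp (- l * a + l\<^sup>2 * (real N * (1 / T)))"
    using bounded second_moment unfolding ps_def
    by (intro prob_Pi_pmf_abs_sum_deviation_ge finite_set_pmf_inpht_user assms(4,5,7,8))
  finally show ?thesis .
qed

lemma report_statistics_fail_prob_le:
  fixes d k N :: nat and e :: real and j :: "nat \<Rightarrow> nat set"
  defines "T \<equiv> real (num_coefs d k)" and "L \<equiv> ln (6 * real (num_coefs d k))"
  assumes k: "1 \<le> k" "k \<le> d" and "\<alpha> \<in> coef_set d k" "0 < N" and large: "16 * T * L \<le> real N"
  shows "measure_pmf.prob (inpht_reports d k e N j)
           ({R. real (card {i\<in>{..<N}. fst (R i) = \<alpha>}) \<le> real N / (2 * T)} \<union>
            {R. 2 * sqrt (real N * L / T) \<le> \<bar>\<Sum>i\<in>{i\<in>{..<N}. fst (R i) = \<alpha>}.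
                   (real_of_int (snd (R i)) - (2 * p_r e - 1) * coef_mean N j \<alpha>) / 2\<bar>})
         \<le> 1 / (2 * T)"
proof -
  let ?P = "inpht_reports d k e N j"
  define l where "l = sqrt (L * T / real N)"
  have "1 \<le> T" unfolding T_def using one_le_num_coefs[OF k] by simp
  then have "0 < L" unfolding L_def T_def[symmetric] by simp
  have "0 < l" unfolding l_def using \<open>0 < L\<close> \<open>1 \<le> T\<close> \<open>0 < N\<close> by simp
  have l_sq: "l\<^sup>2 = L * T / real N" unfolding l_def using \<open>0 < L\<close> \<open>1 \<le> T\<close> by simp
  have "L * T \<le> 16 * T * L" using \<open>0 < L\<close> \<open>1 \<le> T\<close> by simp
  with large have "L * T \<le> real N" by linarith
  then have "l\<^sup>2 \<le> 1" unfolding l_sq using \<open>0 < N\<close> by simp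
  then have "l \<le> 1" using \<open>0 < l\<close> by (simp add: power_le_one_iff)
  have "L \<le> real N / (16 * T)" using large \<open>1 \<le> T\<close> by (simp add: field_simps)
  have "L * T / real N * (real N * L / T) = L\<^sup>2"
    using \<open>0 < N\<close> \<open>1 \<le> T\<close> by (simp add: power2_eq_square field_simps)
  then have "l * sqrt (real N * L / T) = L"
    unfolding l_def real_sqrt_mult[symmetric] using \<open>0 < L\<close> by simp
  then have exponent: "- l * (2 * sqrt (real N * L / T)) + l\<^sup>2 * (real N * (1 / T)) = - L"
    using l_sq \<open>0 < L\<close> \<open>0 < N\<close> \<open>1 \<le> T\<close> by (simp add: field_simps)
  have "measure_pmf.prob ?P {R. 2 * sqrt (real N * L / T) \<le> \<bar>\<Sum>i\<in>{i\<in>{..<N}. fst (R i) = \<alpha>}.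
                 (real_of_int (snd (R i)) - (2 * p_r e - 1) * coef_mean N j \<alpha>) / 2\<bar>}
        \<le> 2 * exp (- l * (2 * sqrt (real N * L / T)) + l\<^sup>2 * (real N * (1 / T)))"
    unfolding T_def
    by (rule report_sum_deviation_tail[OF k \<open>\<alpha> \<in> coef_set d k\<close>]) (use \<open>0 < l\<close> \<open>l \<le> 1\<close> in auto)
  then have "measure_pmf.prob ?P {R. 2 * sqrt (real N * L / T) \<le> \<bar>\<Sum>i\<in>{i\<in>{..<N}. fst (R i) = \<alpha>}.
                 (real_of_int (snd (R i)) - (2 * p_r e - 1) * coef_mean N j \<alpha>) / 2\<bar>}
             \<le> 2 * exp (- L)"
    unfolding exponent .
  moreover have "measure_pmf.prob ?P {R. real (card {i\<in>{..<N}. fst (R i) = \<alpha>}) \<le> real N / (2 * T)}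
             \<le> exp (- L)"
    unfolding T_def using \<open>L \<le> real N / (16 * T)\<close>
    by (intro order_trans[OF report_count_lower_tail[OF k \<open>\<alpha> \<in> coef_set d k\<close>]]) (simp add: T_def)
  moreover have "exp (- L) = 1 / (6 * T)"
    unfolding L_def T_def[symmetric] using \<open>1 \<le> T\<close> by (simp add: exp_minus inverse_eq_divide)
  ultimately show ?thesis
    by (intro order_trans[OF measure_Un_le]) simp_all
qed

lemma inpht_coefficients_accurate:
  fixes d k N :: nat and e :: real and j :: "nat \<Rightarrow> nat set"
  defines "T \<equiv> real (num_coefs d k)" and "L \<equiv> ln (6 * real (num_coefs d k))" and "q \<equiv> 2 * p_r e - 1"
  assumes k: "1 \<le> k" "k \<le> d" and "0 < q" "0 < N" and large: "16 * T * L \<le> real N"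
  shows "1 / 2 \<le> measure_pmf.prob (inpht_reports d k e N j)
           {R. \<forall>\<alpha>\<in>coef_set d k. \<bar>theta_hat d e N R \<alpha> - 2 powr (- (real d / 2)) * coef_mean N j \<alpha>\<bar>
                 \<le> 2 powr (- (real d / 2)) * (8 * sqrt (L * T / real N) / q)}"
    (is "_ \<le> measure_pmf.prob ?P ?accurate")
proof -
  define a where "a = 2 * sqrt (real N * L / T)"
  define S where "S R \<alpha> = {i\<in>{..<N}. fst (R i) = \<alpha>}" for R :: "nat \<Rightarrow> nat set \<times> int" and \<alpha>
  define fail where "fail \<alpha> = {R. real (card (S R \<alpha>)) \<le> real N / (2 * T)} \<union>
    {R. a \<le> \<bar>\<Sum>i\<in>S R \<alpha>. (real_of_int (snd (R i)) - q * coef_mean N j \<alpha>) / 2\<bar>}" for \<alpha>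
  have "1 \<le> T" unfolding T_def using one_le_num_coefs[OF k] by simp
  have "measure_pmf.prob ?P (\<Union>\<alpha>\<in>coef_set d k. fail \<alpha>) \<le> (\<Sum>\<alpha>\<in>coef_set d k. 1 / (2 * T))"
    using report_statistics_fail_prob_le[OF k _ \<open>0 < N\<close> large[unfolded T_def L_def]]
    unfolding fail_def S_def a_def q_def T_def L_def
    by (intro order_trans[OF measure_pmf.finite_measure_subadditive_finite] sum_mono)
      (auto simp: finite_coef_set)
  also have "\<dots> = 1 / 2" using \<open>1 \<le> T\<close> by (simp add: T_def card_coef_set)
  finally have "1 / 2 \<le> measure_pmf.prob ?P (UNIV - (\<Union>\<alpha>\<in>coef_set d k. fail \<alpha>))"
    using measure_pmf.prob_compl[of "\<Union>\<alpha>\<in>coef_set d k. fail \<alpha>" ?P] by simp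
  also have "\<dots> \<le> measure_pmf.prob ?P ?accurate"
  proof (rule measure_pmf.finite_measure_mono, safe)
    fix R \<alpha> assume "R \<notin> (\<Union>\<alpha>\<in>coef_set d k. fail \<alpha>)" and "\<alpha> \<in> coef_set d k"
    then have "real N / (2 * T) < real (card (S R \<alpha>))"
      and "\<bar>\<Sum>i\<in>S R \<alpha>. (real_of_int (snd (R i)) - q * coef_mean N j \<alpha>) / 2\<bar> < a"
      and "\<alpha> \<noteq> {}"
      unfolding fail_def coef_set_def by auto
    then have "\<bar>theta_hat d e N R \<alpha> - 2 powr (- (real d / 2)) * coef_mean N j \<alpha>\<bar>
               \<le> 2 powr (- (real d / 2)) * (4 * a * T / (real N * q))"
      unfolding S_def q_def
      by (intro theta_hat_error_le \<open>0 < N\<close>) (use \<open>1 \<le> T\<close> \<open>0 < q\<close> in \<open>auto simp: q_def\<close>)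
    moreover have "4 * a * T / (real N * q) = 8 * (sqrt (real N * L / T) * T / real N) / q"
      unfolding a_def by (simp add: field_simps)
    moreover have "sqrt (real N * L / T) * T / real N = sqrt (L * T / real N)"
      using \<open>0 < N\<close> \<open>1 \<le> T\<close> by (intro sqrt_rescale) auto
    ultimately show "\<bar>theta_hat d e N R \<alpha> - 2 powr (- (real d / 2)) * coef_mean N j \<alpha>\<bar>
               \<le> 2 powr (- (real d / 2)) * (8 * sqrt (L * T / real N) / q)"
      by simp
  qed simp
  finally show ?thesis .
qed

lemma inpht_error_rate_le:
  fixes d k N :: nat and e :: real
  defines "T \<equiv> real (num_coefs d k)"
  assumes k: "1 \<le> k" "k \<le> d" and e: "0 < e" "e \<le> 1" and "0 < N"
  shows "2 ^ k * (8 * sqrt (ln (6 * T) * T / real N) / (2 * p_r e - 1))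
         \<le> 48 * (exp 1 + 1) * exp 1 * (1 + ln T) ^ 1 * (2 * real d) powr (real k / 2)
            / (e * sqrt (real N))"
proof -
  define q where "q = 2 * p_r e - 1"
  have "1 \<le> T" unfolding T_def using one_le_num_coefs[OF k] by simp
  have "0 < q" unfolding q_def using p_r_margin_pos e by simp
  have "1 / q \<le> 1 / (e / (exp 1 + 1))"
    using p_r_margin_ge[OF e] \<open>0 < q\<close> e unfolding q_def
    by (intro divide_left_mono) (auto simp: add_pos_pos)
  then have "1 / q \<le> (exp 1 + 1) / e" by simp
  moreover have "sqrt (ln (6 * T)) * (2 ^ k * sqrt T)
        \<le> (6 * (1 + ln T)) * (exp 1 * (2 * real d) powr (real k / 2))"
    using two_pow_sqrt_num_coefs_le[OF k] \<open>1 \<le> T\<close> unfolding T_def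
    by (intro mult_mono[OF sqrt_ln_le]) auto
  ultimately have "sqrt (ln (6 * T)) * (2 ^ k * sqrt T) * (1 / q)
        \<le> (6 * (1 + ln T)) * (exp 1 * (2 * real d) powr (real k / 2)) * ((exp 1 + 1) / e)"
    using \<open>0 < q\<close> \<open>1 \<le> T\<close> by (intro mult_mono[OF _ \<open>1 / q \<le> (exp 1 + 1) / e\<close>]) auto
  then have "8 * (sqrt (ln (6 * T)) * (2 ^ k * sqrt T) * (1 / q)) / sqrt (real N)
        \<le> 8 * ((6 * (1 + ln T)) * (exp 1 * (2 * real d) powr (real k / 2)) * ((exp 1 + 1) / e))
          / sqrt (real N)"
    by (intro divide_right_mono mult_left_mono) auto
  moreover have "2 ^ k * (8 * sqrt (ln (6 * T) * T / real N) / q)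
        = 8 * (sqrt (ln (6 * T)) * (2 ^ k * sqrt T) * (1 / q)) / sqrt (real N)"
    by (simp add: real_sqrt_mult real_sqrt_divide mult_ac)
  ultimately show ?thesis
    unfolding q_def[symmetric] using e by (simp add: field_simps)
qed

lemma theta_hat_empty:
  "0 < N \<Longrightarrow> theta_hat d e N R {} = 2 powr (- (real d / 2)) * coef_mean N j {}"
  by (simp add: theta_hat_def coef_mean_def)

lemma inpht_marginals_accurate:
  fixes d k N :: nat and e :: real and j :: "nat \<Rightarrow> nat set"
  defines "T \<equiv> real (num_coefs d k)"
  assumes k: "1 \<le> k" "k \<le> d" and e: "0 < e" "e \<le> 1" and "0 < N"
    and large: "16 * T * ln (6 * T) \<le> real N" and j: "\<forall>i<N. j i \<subseteq> {..<d}"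
  shows "1 / 2 \<le> measure_pmf.prob (inpht_reports d k e N j)
           {R. \<forall>\<beta>. \<beta> \<subseteq> {..<d} \<and> card \<beta> = k \<longrightarrow>
                 marginal_l1_err d e N j R \<beta>
                   \<le> 48 * (exp 1 + 1) * exp 1 * (1 + ln T) ^ 1
                       * (2 * real d) powr (real k / 2) / (e * sqrt (real N))}"
    (is "_ \<le> measure_pmf.prob _ {R. \<forall>\<beta>. _ \<longrightarrow> marginal_l1_err d e N j R \<beta> \<le> ?rate}")
proof -
  define c :: real where "c = 2 powr (- (real d / 2))"
  define M where "M = 8 * sqrt (ln (6 * T) * T / real N) / (2 * p_r e - 1)"
  have "0 < 2 * p_r e - 1" using p_r_margin_pos e by simp
  moreover have "0 \<le> ln (6 * T) * T" unfolding T_def using one_le_num_coefs[OF k] by simp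
  ultimately have "0 \<le> M" unfolding M_def by simp
  have "1 / 2 \<le> measure_pmf.prob (inpht_reports d k e N j)
           {R. \<forall>\<alpha>\<in>coef_set d k. \<bar>theta_hat d e N R \<alpha> - c * coef_mean N j \<alpha>\<bar> \<le> c * M}"
    unfolding M_def c_def T_def
    using inpht_coefficients_accurate[OF k \<open>0 < 2 * p_r e - 1\<close> \<open>0 < N\<close>] large
    by (simp add: T_def)
  also have "\<dots> \<le> measure_pmf.prob (inpht_reports d k e N j)
           {R. \<forall>\<beta>. \<beta> \<subseteq> {..<d} \<and> card \<beta> = k \<longrightarrow> marginal_l1_err d e N j R \<beta> \<le> ?rate}"
  proof (rule measure_pmf.finite_measure_mono, intro subsetI CollectI allI impI, elim conjE)
    fix R \<beta>
    assume "R \<in> {R. \<forall>\<alpha>\<in>coef_set d k. \<bar>theta_hat d e N R \<alpha> - c * coef_mean N j \<alpha>\<bar> \<le> c * M}"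
      and \<beta>: "\<beta> \<subseteq> {..<d}" "card \<beta> = k"
    then have accurate: "\<bar>theta_hat d e N R \<alpha> - c * coef_mean N j \<alpha>\<bar> \<le> c * M"
      if "\<alpha> \<in> coef_set d k" for \<alpha>
      using that by simp
    have "\<bar>theta_hat d e N R \<alpha> - c * coef_mean N j \<alpha>\<bar> \<le> c * M" if "\<alpha> \<subseteq> \<beta>" for \<alpha>
    proof (cases "\<alpha> = {}")
      case True
      then show ?thesis
        using theta_hat_empty[OF \<open>0 < N\<close>, where j = j] \<open>0 \<le> M\<close> by (simp add: c_def)
    next
      case False
      have "finite \<beta>" using \<beta>(1) finite_subset by blast
      then have "card \<alpha> \<le> k" and "0 < card \<alpha>"
        using that False \<beta>(2) card_mono[of \<beta> \<alpha>] by (auto simp: card_gt_0_iff finite_subset)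
      with that \<beta>(1) have "\<alpha> \<in> coef_set d k" unfolding coef_set_def by auto
      then show ?thesis by (rule accurate)
    qed
    then have "marginal_l1_err d e N j R \<beta> \<le> 2 ^ k * M"
      using marginal_l1_err_le[OF j \<beta>(1)] \<beta>(2) unfolding c_def by simp
    also have "\<dots> \<le> ?rate"
      unfolding M_def T_def by (rule inpht_error_rate_le[OF k e \<open>0 < N\<close>])
    finally show "marginal_l1_err d e N j R \<beta> \<le> ?rate" .
  qed simp
  finally show ?thesis .
qed

lemma inpht_marginals_accurate_eventually:
  assumes "1 \<le> k" "k \<le> d" "0 < e" "e \<le> 1"
  shows "\<exists>N0. \<forall>N \<ge> N0. \<forall>j. (\<forall>i<N. j i \<subseteq> {..<d}) \<longrightarrow>
           measure_pmf.prob (inpht_reports d k e N j)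
             {R. \<forall>\<beta>. \<beta> \<subseteq> {..<d} \<and> card \<beta> = k \<longrightarrow>
                   marginal_l1_err d e N j R \<beta>
                     \<le> 48 * (exp 1 + 1) * exp 1 * (1 + ln (real (num_coefs d k))) ^ 1
                         * (2 * real d) powr (real k / 2) / (e * sqrt (real N))}
           \<ge> 1 / 2"
proof (intro exI[of _ "nat \<lceil>16 * real (num_coefs d k) * ln (6 * real (num_coefs d k))\<rceil> + 1"]
    allI impI inpht_marginals_accurate[OF assms])
  fix N :: nat
  assume "nat \<lceil>16 * real (num_coefs d k) * ln (6 * real (num_coefs d k))\<rceil> + 1 \<le> N"
  then show "0 < N" and "16 * real (num_coefs d k) * ln (6 * real (num_coefs d k)) \<le> real N"
    by linarith+
qed auto

theorem theorem4:
  shows "(\<forall>d k \<epsilon>. 0 < \<epsilon> \<longrightarrow> is_LDP \<epsilon> (Pow {..<d}) (inpht_user d k \<epsilon>))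
    \<and> (\<exists>C (m::nat) p. C > 0 \<and> p > 0 \<and>
         (\<forall>d k \<epsilon>. 1 \<le> k \<and> k \<le> d \<and> 0 < \<epsilon> \<and> \<epsilon> \<le> 1 \<longrightarrow>
            (\<exists>N0. \<forall>N \<ge> N0. \<forall>j. (\<forall>i<N. j i \<subseteq> {..<d}) \<longrightarrow>
               measure_pmf.prob (inpht_reports d k \<epsilon> N j)
                 {R. \<forall>\<beta>. \<beta> \<subseteq> {..<d} \<and> card \<beta> = k \<longrightarrow>
                        marginal_l1_err d \<epsilon> N j R \<beta>
                          \<le> C * (1 + ln (real (num_coefs d k))) ^ m
                              * (2 * real d) powr (real k / 2) / (\<epsilon> * sqrt (real N))}
               \<ge> p)))"
  apply (intro conjI allI impI inpht_user_LDP, assumption)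
  apply (rule exI[of _ "48 * (exp 1 + 1) * exp 1"], rule exI[of _ 1], rule exI[of _ "1 / 2"])
  using inpht_marginals_accurate_eventually by (auto simp: add_pos_pos)

end
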